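(* Let $T$ be a set of states and $\varphi=\mathrm{Safety}(T)$. There exists an infinitely branching (countable) MDP $\mathcal M$ with initial state $s$ such that (i) for every FR-strategy $\sigma$ we have $\mathcal P_{\mathcal M,s,\sigma}(\varphi)=0$, and (ii) for every $c\in[0,1)$ there exists an HD-strategy $\sigma$ such that $\mathcal P_{\mathcal M,s,\sigma}(\varphi)\ge c$. Hence $\epsilon$-optimal strategies for safety require infinite memory (i.e., cannot in general be chosen FR).
   Context: An MDP is $\mathcal M=\langle S,S_\Box,S_\circ,\longrightarrow,P\rangle$ where $S$ is a countable set of states partitioned into player states $S_\Box$ and random states $S_\circ$, $\longrightarrow\subseteq S\times S$ is a transition relation in which every state has at least one successor, and $P$ assigns to each random state a probability distribution over its successors. $\mathcal M$ is finitely branching if every state has finitely many successors, otherwise infinitely branching. A play is an infinite sequence $s_0s_1\cdots$ with $s_i\longrightarrow s_{i+1}$ for all $i$. A strategy is a function $\sigma:S^*S_\Box\to\mathcal D(S)$ assigning to each partial play ending in a player state $s$ a probability distribution over successors of $s$. Strategies are implemented by probabilistic transducers $(\mathsf M,\mathsf m_0,\pi_u,\pi_s)$ with countable memory $\mathsf M$, initial mode $\mathsf m_0$, randomized memory update $\pi_u:\mathsf M\times S\to\mathcal D(\mathsf M)$ and randomized successor choice $\pi_s:\mathsf M\times S_\Box\to\mathcal D(S)$ (choosing only successors of the current state); the induced strategy is $\sigma(s_0\cdots s_n)=\pi_s(s_n,\pi_u(s_0\cdots s_{n-1},\mathsf m_0))$ with $\pi_u$ extended naturally. A strategy is finite-memory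 (F) if some transducer with finite $\mathsf M$ induces it, deterministic (D) if $\pi_u,\pi_s$ can be taken Dirac; FR = finite-memory randomized, HD = history-dependent deterministic. $\mathcal P_{\mathcal M,s,\sigma}$ is the induced probability measure on plays from $s$. The safety objective $\mathrm{Safety}(T)$ is the set of plays that never visit a state in $T$. The value of $s$ is $\sup_\sigma\mathcal P_{\mathcal M,s,\sigma}(\varphi)$; $\sigma$ is $\epsilon$-optimal from $s$ if it achieves at least the value minus $\epsilon$. *)

theory Defs
  imports "HOL-Probability.Probability"
begin

text \<open>States are natural numbers (every countable MDP is isomorphic
to one whose states form a subset of nat). S = mdp_states, player states S_Box =
mdp_player, random states are mdp_states - mdp_player.\<close>

record mdp =
  mdp_states :: "nat set"
  mdp_player :: "nat set"
  mdp_trans  :: "(nat \<times> nat) set"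
  mdp_prob   :: "nat \<Rightarrow> nat pmf"

definition succs :: "mdp \<Rightarrow> nat \<Rightarrow> nat set" where
  "succs M x = {y. (x, y) \<in> mdp_trans M}"

definition valid_mdp :: "mdp \<Rightarrow> bool" where
  "valid_mdp M \<longleftrightarrow>
     mdp_player M \<subseteq> mdp_states M \<and>
     mdp_trans M \<subseteq> mdp_states M \<times> mdp_states M \<and>
     (\<forall>x\<in>mdp_states M. succs M x \<noteq> {}) \<and>
     (\<forall>x\<in>mdp_states M - mdp_player M. set_pmf (mdp_prob M x) \<subseteq> succs M x)"

definition infinitely_branching :: "mdp \<Rightarrow> bool" where
  "infinitely_branching M \<longleftrightarrow> (\<exists>x\<in>mdp_states M. infinite (succs M x))"

text \<open>Histories (partial plays ending in a player state): nonempty sequences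
over S whose last state is a player state. A strategy is a function
nat list => nat pmf; only its values on histories matter.\<close>

definition histories :: "mdp \<Rightarrow> nat list set" where
  "histories M = {h. h \<noteq> [] \<and> set h \<subseteq> mdp_states M \<and> last h \<in> mdp_player M}"

text \<open>Probabilistic transducers with memory modes in a set Mem of naturals
(countable memory). The natural extension of the memory update to sequences.\<close>

fun upd_ext :: "(nat \<Rightarrow> nat \<Rightarrow> nat pmf) \<Rightarrow> nat \<Rightarrow> nat list \<Rightarrow> nat pmf" where
  "upd_ext pu m [] = return_pmf m"
| "upd_ext pu m (x # xs) = bind_pmf (pu m x) (\<lambda>m'. upd_ext pu m' xs)"

definition induced_strategy ::
  "(nat \<Rightarrow> nat \<Rightarrow> nat pmf) \<Rightarrow> (nat \<Rightarrow> nat \<Rightarrow> nat pmf) \<Rightarrow> nat \<Rightarrow> nat list \<Rightarrow> nat pmf" where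
  "induced_strategy pu ps m0 h = bind_pmf (upd_ext pu m0 (butlast h)) (\<lambda>m. ps m (last h))"

definition transducer ::
  "mdp \<Rightarrow> nat set \<Rightarrow> nat \<Rightarrow> (nat \<Rightarrow> nat \<Rightarrow> nat pmf) \<Rightarrow> (nat \<Rightarrow> nat \<Rightarrow> nat pmf) \<Rightarrow> bool" where
  "transducer M Mem m0 pu ps \<longleftrightarrow>
     m0 \<in> Mem \<and>
     (\<forall>m\<in>Mem. \<forall>x\<in>mdp_states M. set_pmf (pu m x) \<subseteq> Mem) \<and>
     (\<forall>m\<in>Mem. \<forall>x\<in>mdp_player M. set_pmf (ps m x) \<subseteq> succs M x)"

definition deterministic_transducer ::
  "mdp \<Rightarrow> nat set \<Rightarrow> (nat \<Rightarrow> nat \<Rightarrow> nat pmf) \<Rightarrow> (nat \<Rightarrow> nat \<Rightarrow> nat pmf) \<Rightarrow> bool" where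
  "deterministic_transducer M Mem pu ps \<longleftrightarrow>
     (\<forall>m\<in>Mem. \<forall>x\<in>mdp_states M. \<exists>m'. pu m x = return_pmf m') \<and>
     (\<forall>m\<in>Mem. \<forall>x\<in>mdp_player M. \<exists>y. ps m x = return_pmf y)"

definition implements :: "mdp \<Rightarrow> (nat list \<Rightarrow> nat pmf) \<Rightarrow> nat \<Rightarrow>
    (nat \<Rightarrow> nat \<Rightarrow> nat pmf) \<Rightarrow> (nat \<Rightarrow> nat \<Rightarrow> nat pmf) \<Rightarrow> bool" where
  "implements M \<sigma> m0 pu ps \<longleftrightarrow> (\<forall>h\<in>histories M. \<sigma> h = induced_strategy pu ps m0 h)"

definition FR_strategy :: "mdp \<Rightarrow> (nat list \<Rightarrow> nat pmf) \<Rightarrow> bool" where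
  "FR_strategy M \<sigma> \<longleftrightarrow>
     (\<exists>Mem m0 pu ps. finite Mem \<and> transducer M Mem m0 pu ps \<and> implements M \<sigma> m0 pu ps)"

definition HD_strategy :: "mdp \<Rightarrow> (nat list \<Rightarrow> nat pmf) \<Rightarrow> bool" where
  "HD_strategy M \<sigma> \<longleftrightarrow>
     (\<exists>Mem m0 pu ps. transducer M Mem m0 pu ps \<and> deterministic_transducer M Mem pu ps
        \<and> implements M \<sigma> m0 pu ps)"

definition step :: "mdp \<Rightarrow> (nat list \<Rightarrow> nat pmf) \<Rightarrow> nat list \<Rightarrow> nat pmf" where
  "step M \<sigma> h = (if last h \<in> mdp_player M then \<sigma> h else mdp_prob M (last h))"

fun surv :: "mdp \<Rightarrow> (nat list \<Rightarrow> nat pmf) \<Rightarrow> nat set \<Rightarrow> nat \<Rightarrow> nat list \<Rightarrow> ennreal" where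
  "surv M \<sigma> T 0 h = 1"
| "surv M \<sigma> T (Suc n) h =
     (\<integral>\<^sup>+ t. (if t \<in> T then 0 else surv M \<sigma> T n (h @ [t])) \<partial>measure_pmf (step M \<sigma> h))"

text \<open>P_{M,s,sigma}(Safety T): by continuity from above of the induced measure on plays,
the probability of never visiting T equals the infimum over n of the probability
that the first n+1 states avoid T.\<close>
definition safety_prob :: "mdp \<Rightarrow> (nat list \<Rightarrow> nat pmf) \<Rightarrow> nat set \<Rightarrow> nat \<Rightarrow> ennreal" where
  "safety_prob M \<sigma> T s = (if s \<in> T then 0 else (INF n. surv M \<sigma> T n [s]))"

end

theory Submission
  imports Defs
begin

text \<open>The player state 0 must pick a gamble k \<ge> 2, which falls into the absorbing trap 1
with probability 2^-k and otherwise returns to 0. A strategy with finite memory draws each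
gamble from one of finitely many distributions, so every round is survived with probability at
most some \<gamma> < 1 and safety fails almost surely. Choosing the gamble j + 2 n + 2 in round n
needs an unbounded counter, but survives with probability at least 1 - 2^-(j+1), since the risks
2^-(j+2n+2) sum to less than 2^-(j+1).\<close>

definition trap_risk :: "nat \<Rightarrow> real" where
  "trap_risk k = (1/2) ^ k"

definition trap_mdp :: mdp where
  "trap_mdp = \<lparr> mdp_states = UNIV, mdp_player = {0},
     mdp_trans = {(0, k) | k. 2 \<le> k} \<union> {(1, 1)} \<union> {(k, t) | k t. 2 \<le> k \<and> t \<le> 1},
     mdp_prob = (\<lambda>k. if k = 1 then return_pmf 1
                     else map_pmf (\<lambda>b. if b then 1 else 0) (bernoulli_pmf (trap_risk k))) \<rparr>"

lemma trap_risk_pos: "0 < trap_risk k"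
  and trap_risk_le_1: "trap_risk k \<le> 1"
  by (auto simp: trap_risk_def power_le_one)

lemma mdp_states_trap_mdp: "mdp_states trap_mdp = UNIV"
  and mdp_player_trap_mdp: "mdp_player trap_mdp = {0}"
  by (simp_all add: trap_mdp_def)

lemma succs_trap_mdp_0: "succs trap_mdp 0 = {2..}"
  by (auto simp: succs_def trap_mdp_def)

lemma valid_trap_mdp: "valid_mdp trap_mdp"
  unfolding valid_mdp_def
proof (intro conjI ballI)
  show "mdp_player trap_mdp \<subseteq> mdp_states trap_mdp"
    and "mdp_trans trap_mdp \<subseteq> mdp_states trap_mdp \<times> mdp_states trap_mdp"
    by (auto simp: trap_mdp_def)
next
  fix x :: nat
  consider "x = 0" | "x = 1" | "2 \<le> x" by linarith
  then show "succs trap_mdp x \<noteq> {}"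
    by cases (auto simp: succs_def trap_mdp_def)
  assume "x \<in> mdp_states trap_mdp - mdp_player trap_mdp"
  then have "x = 1 \<or> 2 \<le> x"
    by (auto simp: mdp_player_trap_mdp)
  then show "set_pmf (mdp_prob trap_mdp x) \<subseteq> succs trap_mdp x"
    by (auto simp: trap_mdp_def succs_def)
qed

lemma infinitely_branching_trap_mdp: "infinitely_branching trap_mdp"
  unfolding infinitely_branching_def
  by (rule bexI[of _ 0]) (simp_all add: succs_trap_mdp_0 infinite_Ici mdp_states_trap_mdp)

lemma histories_trap_mdp: "histories trap_mdp = {h. h \<noteq> [] \<and> last h = 0}"
  by (auto simp: histories_def mdp_states_trap_mdp mdp_player_trap_mdp)

lemma step_trap_mdp:
  "step trap_mdp \<sigma> h = (if last h = 0 then \<sigma> h else mdp_prob trap_mdp (last h))"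
  by (simp add: step_def mdp_player_trap_mdp)

lemma nn_integral_trap_mdp_gamble:
  assumes "2 \<le> k"
  shows "(\<integral>\<^sup>+t. f t \<partial>measure_pmf (mdp_prob trap_mdp k))
           = f 1 * ennreal (trap_risk k) + f 0 * ennreal (1 - trap_risk k)"
  using assms trap_risk_pos[of k] trap_risk_le_1[of k] by (simp add: trap_mdp_def)

lemma surv_trap_mdp_round:
  assumes "last h = 0" and "set_pmf (\<sigma> h) \<subseteq> {2..}"
  shows "surv trap_mdp \<sigma> {1} (Suc (Suc n)) h
           = (\<integral>\<^sup>+k. ennreal (1 - trap_risk k) * surv trap_mdp \<sigma> {1} n (h @ [k, 0]) \<partial>\<sigma> h)"
proof -
  have "surv trap_mdp \<sigma> {1} (Suc (Suc n)) h
          = (\<integral>\<^sup>+k. (if k \<in> {1} then 0 else surv trap_mdp \<sigma> {1} (Suc n) (h @ [k])) \<partial>\<sigma> h)"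
    by (subst surv.simps(2)) (simp only: step_trap_mdp assms(1) if_True simp_thms)
  also have "\<dots> = (\<integral>\<^sup>+k. ennreal (1 - trap_risk k) * surv trap_mdp \<sigma> {1} n (h @ [k, 0]) \<partial>\<sigma> h)"
    using assms(2)
    by (intro nn_integral_cong_AE)
       (auto simp: AE_measure_pmf_iff step_trap_mdp nn_integral_trap_mdp_gamble mult.commute)
  finally show ?thesis .
qed

lemma set_pmf_upd_ext_subset:
  assumes "transducer M Mem m0 pu ps" and "m \<in> Mem" and "set xs \<subseteq> mdp_states M"
  shows "set_pmf (upd_ext pu m xs) \<subseteq> Mem"
  using assms(2,3)
proof (induction xs arbitrary: m)
  case (Cons x xs)
  have "set_pmf (pu m x) \<subseteq> Mem"
    using assms(1) Cons.prems by (auto simp: transducer_def)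
  with Cons show ?case by auto
qed simp

lemma set_pmf_induced_strategy_subset:
  assumes "transducer M Mem m0 pu ps" and "h \<in> histories M"
  shows "set_pmf (induced_strategy pu ps m0 h) \<subseteq> succs M (last h)"
proof -
  have "set (butlast h) \<subseteq> mdp_states M" and last: "last h \<in> mdp_player M"
    using assms(2) by (auto simp: histories_def dest: in_set_butlastD)
  then have "set_pmf (upd_ext pu m0 (butlast h)) \<subseteq> Mem"
    using set_pmf_upd_ext_subset[OF assms(1)] assms(1) by (simp add: transducer_def)
  moreover have "set_pmf (ps m (last h)) \<subseteq> succs M (last h)" if "m \<in> Mem" for m
    using assms(1) last that by (simp add: transducer_def)
  ultimately show ?thesis
    unfolding induced_strategy_def set_bind_pmf by blast
qed

lemma nn_integral_induced_strategy_le_SUP: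
  assumes "transducer M Mem m0 pu ps" and "set (butlast h) \<subseteq> mdp_states M"
  shows "(\<integral>\<^sup>+t. f t \<partial>induced_strategy pu ps m0 h) \<le> (SUP m\<in>Mem. \<integral>\<^sup>+t. f t \<partial>ps m (last h))"
proof -
  have "(\<integral>\<^sup>+t. f t \<partial>induced_strategy pu ps m0 h)
          = (\<integral>\<^sup>+m. (\<integral>\<^sup>+t. f t \<partial>ps m (last h)) \<partial>upd_ext pu m0 (butlast h))"
    by (simp add: induced_strategy_def)
  also have "\<dots> \<le> (\<integral>\<^sup>+m. (SUP m\<in>Mem. \<integral>\<^sup>+t. f t \<partial>ps m (last h)) \<partial>upd_ext pu m0 (butlast h))"
  proof (intro nn_integral_mono_AE)
    have "set_pmf (upd_ext pu m0 (butlast h)) \<subseteq> Mem"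
      using set_pmf_upd_ext_subset[OF assms(1) _ assms(2)] assms(1) by (simp add: transducer_def)
    then show "AE m in upd_ext pu m0 (butlast h).
                 (\<integral>\<^sup>+t. f t \<partial>ps m (last h)) \<le> (SUP m\<in>Mem. \<integral>\<^sup>+t. f t \<partial>ps m (last h))"
      by (auto simp: AE_measure_pmf_iff intro!: SUP_upper)
  qed
  finally show ?thesis by simp
qed

lemma nn_integral_measure_pmf_less_1:
  fixes f :: "'a \<Rightarrow> ennreal"
  assumes "\<And>x. x \<in> set_pmf D \<Longrightarrow> f x < 1"
  shows "(\<integral>\<^sup>+x. f x \<partial>measure_pmf D) < 1"
proof -
  have "(\<integral>\<^sup>+x. f x \<partial>measure_pmf D) \<le> (\<integral>\<^sup>+x. 1 \<partial>measure_pmf D)"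
    using assms by (intro nn_integral_mono_AE) (auto simp: AE_measure_pmf_iff less_imp_le)
  then have "(\<integral>\<^sup>+x. f x \<partial>measure_pmf D) \<noteq> \<infinity>"
    by (auto simp: top_unique)
  moreover have "\<not> (AE x in measure_pmf D. 1 \<le> f x)"
    using assms set_pmf_not_empty[of D] by (auto simp: AE_measure_pmf_iff not_le)
  ultimately have "(\<integral>\<^sup>+x. f x \<partial>measure_pmf D) < (\<integral>\<^sup>+x. 1 \<partial>measure_pmf D)"
    using assms by (intro nn_integral_less) (auto simp: AE_measure_pmf_iff less_imp_le)
  then show ?thesis by simp
qed

lemma INF_power_eq_0:
  fixes \<gamma> :: ennreal
  assumes "\<gamma> < 1"
  shows "(INF n. \<gamma> ^ n) = 0"
proof -
  obtain r where r: "\<gamma> = ennreal r" "0 \<le> r" "r < 1"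
    using assms by (cases \<gamma> rule: ennreal_cases) auto
  have "(\<lambda>n. ennreal (r ^ n)) \<longlonglongrightarrow> ennreal 0"
    using r by (intro tendsto_ennrealI LIMSEQ_power_zero) simp
  then have "(\<lambda>n. \<gamma> ^ n) \<longlonglongrightarrow> 0"
    using r by (simp add: ennreal_power)
  then have "(INF n. \<gamma> ^ n) \<le> 0"
    by (rule LIMSEQ_le_const) (auto intro: INF_lower)
  then show ?thesis by simp
qed

lemma FR_strategy_trap_mdp_round_bound:
  assumes "FR_strategy trap_mdp \<sigma>"
  obtains \<gamma> where "\<gamma> < 1"
    and "\<And>h. h \<in> histories trap_mdp \<Longrightarrow> set_pmf (\<sigma> h) \<subseteq> {2..}"
    and "\<And>h. h \<in> histories trap_mdp \<Longrightarrow> (\<integral>\<^sup>+k. ennreal (1 - trap_risk k) \<partial>\<sigma> h) \<le> \<gamma>"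
proof -
  obtain Mem m0 pu ps where fin: "finite Mem" and tr: "transducer trap_mdp Mem m0 pu ps"
    and imp: "implements trap_mdp \<sigma> m0 pu ps"
    using assms unfolding FR_strategy_def by blast
  define \<gamma> where "\<gamma> = (SUP m\<in>Mem. \<integral>\<^sup>+k. ennreal (1 - trap_risk k) \<partial>ps m 0)"
  have "Mem \<noteq> {}"
    using tr by (auto simp: transducer_def)
  moreover have "(\<integral>\<^sup>+k. ennreal (1 - trap_risk k) \<partial>ps m 0) < 1" for m
    using trap_risk_pos by (intro nn_integral_measure_pmf_less_1) simp
  ultimately have "\<gamma> < 1"
    using fin by (simp add: \<gamma>_def finite_Sup_less_iff)
  moreover have "set_pmf (\<sigma> h) \<subseteq> {2..}" and "(\<integral>\<^sup>+k. ennreal (1 - trap_risk k) \<partial>\<sigma> h) \<le> \<gamma>"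
    if h: "h \<in> histories trap_mdp" for h
  proof -
    have \<sigma>: "\<sigma> h = induced_strategy pu ps m0 h" and last: "last h = 0"
      using h imp by (auto simp: implements_def histories_trap_mdp)
    show "set_pmf (\<sigma> h) \<subseteq> {2..}"
      using set_pmf_induced_strategy_subset[OF tr h] by (simp add: \<sigma> last succs_trap_mdp_0)
    show "(\<integral>\<^sup>+k. ennreal (1 - trap_risk k) \<partial>\<sigma> h) \<le> \<gamma>"
      using nn_integral_induced_strategy_le_SUP[OF tr, of h] last
      by (simp add: \<sigma> \<gamma>_def mdp_states_trap_mdp)
  qed
  ultimately show thesis
    using that by blast
qed

lemma safety_prob_trap_mdp_FR:
  assumes "FR_strategy trap_mdp \<sigma>"
  shows "safety_prob trap_mdp \<sigma> {1} 0 = 0"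
proof -
  obtain \<gamma> where "\<gamma> < 1"
    and supp: "\<And>h. h \<in> histories trap_mdp \<Longrightarrow> set_pmf (\<sigma> h) \<subseteq> {2..}"
    and round: "\<And>h. h \<in> histories trap_mdp \<Longrightarrow> (\<integral>\<^sup>+k. ennreal (1 - trap_risk k) \<partial>\<sigma> h) \<le> \<gamma>"
    using FR_strategy_trap_mdp_round_bound[OF assms] by blast
  have decay: "surv trap_mdp \<sigma> {1} (2 * n) h \<le> \<gamma> ^ n" if "h \<in> histories trap_mdp" for n h
    using that
  proof (induction n arbitrary: h)
    case (Suc n)
    have "2 * Suc n = Suc (Suc (2 * n))"
      by simp
    then have "surv trap_mdp \<sigma> {1} (2 * Suc n) h
            = (\<integral>\<^sup>+k. ennreal (1 - trap_risk k) * surv trap_mdp \<sigma> {1} (2 * n) (h @ [k, 0]) \<partial>\<sigma> h)"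
      using Suc.prems supp[OF Suc.prems]
      by (simp only:) (rule surv_trap_mdp_round, simp_all add: histories_trap_mdp)
    also have "\<dots> \<le> (\<integral>\<^sup>+k. ennreal (1 - trap_risk k) * \<gamma> ^ n \<partial>\<sigma> h)"
      using Suc.IH by (intro nn_integral_mono mult_left_mono) (auto simp: histories_trap_mdp)
    also have "\<dots> = (\<integral>\<^sup>+k. ennreal (1 - trap_risk k) \<partial>\<sigma> h) * \<gamma> ^ n"
      by (simp add: nn_integral_multc)
    also have "\<dots> \<le> \<gamma> * \<gamma> ^ n"
      using round[OF Suc.prems] by (rule mult_right_mono) simp
    finally show ?case
      by (simp only: power_Suc)
  qed simp
  have "(INF n. surv trap_mdp \<sigma> {1} n [0]) \<le> (INF n. \<gamma> ^ n)"
    using decay[of "[0]"] by (intro INF_mono) (auto simp: histories_trap_mdp)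
  then show ?thesis
    using \<open>\<gamma> < 1\<close> by (simp add: safety_prob_def INF_power_eq_0)
qed

definition count_update :: "nat \<Rightarrow> nat \<Rightarrow> nat pmf" where
  "count_update m x = return_pmf (Suc m)"

definition count_choice :: "nat \<Rightarrow> nat \<Rightarrow> nat \<Rightarrow> nat pmf" where
  "count_choice j m x = return_pmf (m + j + 2)"

definition counting_strategy :: "nat \<Rightarrow> nat list \<Rightarrow> nat pmf" where
  "counting_strategy j = induced_strategy count_update (count_choice j) 0"

lemma upd_ext_count_update: "upd_ext count_update m xs = return_pmf (m + length xs)"
  by (induction xs arbitrary: m) (auto simp: count_update_def bind_return_pmf)

lemma counting_strategy_eq: "h \<noteq> [] \<Longrightarrow> counting_strategy j h = return_pmf (length h + j + 1)"
  by (cases h rule: rev_cases)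
     (auto simp: counting_strategy_def induced_strategy_def upd_ext_count_update count_choice_def bind_return_pmf)

lemma HD_strategy_counting_strategy: "HD_strategy trap_mdp (counting_strategy j)"
  unfolding HD_strategy_def
  by (intro exI[of _ UNIV] exI[of _ 0] exI[of _ count_update] exI[of _ "count_choice j"] conjI)
     (auto simp: transducer_def deterministic_transducer_def implements_def counting_strategy_def
        count_update_def count_choice_def mdp_player_trap_mdp succs_trap_mdp_0)

text \<open>The choice k = length h + j + 1 grows by 2 per round, so the risk r of the current gamble
drops to r/4 in the next one, and (1 - r) (1 - r/2) \<ge> 1 - 2 r keeps the bound invariant.\<close>

lemma surv_counting_strategy_ge:
  assumes "h \<in> histories trap_mdp"
  shows "ennreal (1 - 2 * trap_risk (length h + j + 1)) \<le> surv trap_mdp (counting_strategy j) {1} n h"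
  using assms
proof (induction n arbitrary: h rule: induct_nat_012)
  case 0
  then show ?case
    using trap_risk_pos by (simp add: ennreal_le_1 less_imp_le)
next
  case 1
  then show ?case
    using trap_risk_pos by (simp add: histories_trap_mdp step_trap_mdp counting_strategy_eq ennreal_le_1 less_imp_le)
next
  case (ge2 n)
  define k where "k = length h + j + 1"
  define r where "r = trap_risk k"
  have r: "0 < r" "r \<le> 1" and r_next: "trap_risk (Suc (Suc k)) = r / 4"
    by (simp_all add: r_def trap_risk_pos trap_risk_le_1) (simp add: trap_risk_def)
  have \<sigma>: "counting_strategy j h = return_pmf k"
    using ge2.prems by (simp add: histories_trap_mdp counting_strategy_eq k_def)
  have round: "surv trap_mdp (counting_strategy j) {1} (Suc (Suc n)) h
                 = ennreal (1 - r) * surv trap_mdp (counting_strategy j) {1} n (h @ [k, 0])"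
    using ge2.prems
    by (subst surv_trap_mdp_round) (auto simp: \<sigma> histories_trap_mdp r_def k_def Suc_le_eq)
  have "ennreal (1 - 2 * r) \<le> ennreal ((1 - r) * (1 - r / 2))"
    using r by (intro ennreal_leI) (simp add: algebra_simps)
  also have "\<dots> = ennreal (1 - r) * ennreal (1 - 2 * trap_risk (k + 2))"
    using r by (simp add: r_next ennreal_mult)
  also have "\<dots> \<le> ennreal (1 - r) * surv trap_mdp (counting_strategy j) {1} n (h @ [k, 0])"
    using ge2.IH(1)[of "h @ [k, 0]"] by (intro mult_left_mono) (simp_all add: histories_trap_mdp k_def)
  also have "\<dots> = surv trap_mdp (counting_strategy j) {1} (Suc (Suc n)) h"
    by (rule round[symmetric])
  finally show ?case
    by (simp only: r_def k_def)
qed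

lemma safety_prob_counting_strategy_ge:
  "ennreal (1 - (1/2) ^ Suc j) \<le> safety_prob trap_mdp (counting_strategy j) {1} 0"
proof -
  have "ennreal (1 - (1/2) ^ Suc j) = ennreal (1 - 2 * trap_risk (length [0::nat] + j + 1))"
    by (simp add: trap_risk_def)
  also have "\<dots> \<le> (INF n. surv trap_mdp (counting_strategy j) {1} n [0])"
    by (intro INF_greatest surv_counting_strategy_ge) (simp add: histories_trap_mdp)
  finally show ?thesis
    by (simp add: safety_prob_def)
qed

theorem theorem5:
  shows "\<exists>M s T. valid_mdp M \<and> infinitely_branching M \<and> s \<in> mdp_states M \<and>
           T \<subseteq> mdp_states M \<and>
           (\<forall>\<sigma>. FR_strategy M \<sigma> \<longrightarrow> safety_prob M \<sigma> T s = 0) \<and>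
           (\<forall>c::real. 0 \<le> c \<and> c < 1 \<longrightarrow>
              (\<exists>\<sigma>. HD_strategy M \<sigma> \<and> safety_prob M \<sigma> T s \<ge> ennreal c))"
proof (rule exI[of _ trap_mdp], rule exI[of _ 0], rule exI[of _ "{1}"], intro conjI allI impI)
  show "valid_mdp trap_mdp" "infinitely_branching trap_mdp"
    by (fact valid_trap_mdp infinitely_branching_trap_mdp)+
  show "0 \<in> mdp_states trap_mdp" "{1} \<subseteq> mdp_states trap_mdp"
    by (simp_all add: mdp_states_trap_mdp)
  show "safety_prob trap_mdp \<sigma> {1} 0 = 0" if "FR_strategy trap_mdp \<sigma>" for \<sigma>
    using that by (rule safety_prob_trap_mdp_FR)
  fix c :: real
  assume c: "0 \<le> c \<and> c < 1"
  then obtain j where "(1/2::real) ^ j < 1 - c"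
    using real_arch_pow_inv[of "1 - c" "1/2"] by auto
  moreover have "(1/2::real) ^ Suc j \<le> (1/2) ^ j"
    by simp
  ultimately have "ennreal c \<le> ennreal (1 - (1/2) ^ Suc j)"
    by (intro ennreal_leI) linarith
  also note safety_prob_counting_strategy_ge
  finally show "\<exists>\<sigma>. HD_strategy trap_mdp \<sigma> \<and> ennreal c \<le> safety_prob trap_mdp \<sigma> {1} 0"
    using HD_strategy_counting_strategy by blast
qed

end
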